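(* Let $f_1,\dots,f_n$ satisfy Assumptions A1 and A2 and let $f_0$ satisfy Assumption A3. Then for all $x\in\mathbb{R}^d$ and $\beta\in\Delta^{n-1}$, \[\big\|\nabla(f_0\circ x^* )(\beta)^\top-\nabla f_0(x)^\top\widehat{\nabla}x^*(x,\beta)\big\|_{1,2}\le\frac{1}{\mu}\left(\frac{M_1}{2M_0}\|\nabla f_0(x)\|_2+L_0M_0\right)\|\nabla f_\beta(x)\|_2.\] The right-hand side is denoted $\mathrm{err}_{\nabla f_0}(x,\beta)$.
   Context: Assumption A1: each $f_i:\mathbb{R}^d\to\mathbb{R}$ is twice differentiable with $\mu\mathbf{I}\preceq\nabla^2 f_i\preceq L\mathbf{I}$, $0<\mu\le L$, $\kappa:=L/\mu$. Assumption A2: each $\nabla^2 f_i$ is $L_H$-Lipschitz (operator norm). Assumption A3: $f_0:\mathbb{R}^d\to\mathbb{R}$ has $L_0$-Lipschitz gradient. $F=(f_1,\dots,f_n)$, $\nabla F(x)\in\mathbb{R}^{n\times d}$ its Jacobian, $f_\beta=\sum_i\beta_if_i$ for $\beta$ in the simplex $\Delta^{n-1}$, $x^*(\beta)=x_\beta=\operatorname{argmin}_x f_\beta(x)$. $\nabla(f_0\circ x^* )(\beta)^\top$ denotes the derivative of $f_0\circ x^*$ as a row vector ($=\nabla f_0(x_\beta)^\top\nabla x^*(\beta)$), and $\widehat{\nabla}x^*(x,\beta):=-\nabla^2 f_\beta(x)^{-1}\nabla F(x)^\top$. $R$ is the $\ell_2$-diameter of the Pareto set of $F$, $M_0:=\kappa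 R$, $M_1:=2\kappa^2R(1+L_HR/\mu)$. $\|A\|_{1,2}:=\sup_{\|z\|_1=1}\|Az\|_2$. *)

theory Defs
  imports "HOL-Analysis.Analysis"
begin

text \<open>Objective index type 'n (so F = (f_i)_{i in 'n}, n = CARD('n)); x in real^'d.\<close>

definition fbeta :: "('n::finite \<Rightarrow> real^'d \<Rightarrow> real) \<Rightarrow> real^'n \<Rightarrow> real^'d \<Rightarrow> real" where
  "fbeta f \<beta> x = (\<Sum>i\<in>UNIV. \<beta>$i * f i x)"

definition xstar :: "('n::finite \<Rightarrow> real^'d \<Rightarrow> real) \<Rightarrow> real^'n \<Rightarrow> real^'d" where
  "xstar f \<beta> = (THE x. \<forall>y. fbeta f \<beta> x \<le> fbeta f \<beta> y)"

definition prob_simplex :: "(real^'n::finite) set" where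
  "prob_simplex = {\<beta>. (\<forall>i. 0 \<le> \<beta>$i) \<and> (\<Sum>i\<in>UNIV. \<beta>$i) = 1}"

definition pareto_set :: "('n::finite \<Rightarrow> real^'d \<Rightarrow> real) \<Rightarrow> (real^'d) set" where
  "pareto_set f = {x. \<not> (\<exists>y. (\<forall>i. f i y \<le> f i x) \<and> (\<exists>i. f i y < f i x))}"

definition jac :: "('n::finite \<Rightarrow> real^'d \<Rightarrow> real^'d) \<Rightarrow> real^'d \<Rightarrow> real^'d^'n" where
  "jac g x = (\<chi> i. g i x)"

definition hess_beta :: "('n::finite \<Rightarrow> real^'d \<Rightarrow> real^'d^'d) \<Rightarrow> real^'n \<Rightarrow> real^'d \<Rightarrow> real^'d^'d" where
  "hess_beta H \<beta> x = (\<Sum>i\<in>UNIV. \<beta>$i *\<^sub>R H i x)"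

definition grad_beta :: "('n::finite \<Rightarrow> real^'d \<Rightarrow> real^'d) \<Rightarrow> real^'n \<Rightarrow> real^'d \<Rightarrow> real^'d" where
  "grad_beta g \<beta> x = (\<Sum>i\<in>UNIV. \<beta>$i *\<^sub>R g i x)"

definition hat_grad_xstar ::
  "('n::finite \<Rightarrow> real^'d \<Rightarrow> real^'d) \<Rightarrow> ('n \<Rightarrow> real^'d \<Rightarrow> real^'d^'d) \<Rightarrow> real^'d \<Rightarrow> real^'n \<Rightarrow> real^'n^'d" where
  "hat_grad_xstar g H x \<beta> = - (matrix_inv (hess_beta H \<beta> x) ** transpose (jac g x))"

definition row_of :: "(real^'n::finite \<Rightarrow> real) \<Rightarrow> real^'n^1" where
  "row_of D = (\<chi> k. \<chi> j. D (axis j 1))"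

definition rowmat :: "real^'n::finite \<Rightarrow> real^'n^1" where
  "rowmat v = (\<chi> k. v)"

definition l1norm :: "real^'n::finite \<Rightarrow> real" where
  "l1norm z = (\<Sum>i\<in>UNIV. \<bar>z$i\<bar>)"

definition norm12 :: "real^'n::finite^'m::finite \<Rightarrow> real" where
  "norm12 A = Sup {norm (A *v z) | z. l1norm z = 1}"

end

theory Submission
  imports Defs
begin

(* Strong convexity makes x\<^sup>*(\<beta>') the unique zero of \<nabla>f\<^sub>\<beta>', also for weights \<beta>' slightly
   off the simplex, and subtracting the optimality conditions at \<beta>' and \<beta> shows that x\<^sup>* is
   differentiable at \<beta> with the implicit-function derivative -(\<nabla>\<^sup>2f\<^sub>\<beta>)\<^sup>-\<^sup>1 \<nabla>F\<^sup>T.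
   The j-th entry of the error row is then the difference of \<nabla>f\<^sub>0\<^sup>T (\<nabla>\<^sup>2f\<^sub>\<beta>)\<^sup>-\<^sup>1 \<nabla>f\<^sub>j
   between x\<^sub>\<beta> = x\<^sup>*(\<beta>) and x.  Since |\<nabla>f\<^sub>j(x\<^sub>\<beta>)| \<le> L R (both x\<^sub>\<beta> and the minimiser of f\<^sub>j
   lie in the Pareto set) and \<nabla>f\<^sub>j, \<nabla>\<^sup>2f\<^sub>\<beta>, \<nabla>f\<^sub>0 are Lipschitz, this difference is at most
   (L\<^sub>0 M\<^sub>0 + M\<^sub>1/(2 M\<^sub>0) |\<nabla>f\<^sub>0(x)|) |x - x\<^sub>\<beta>|, and strong convexity gives
   |x - x\<^sub>\<beta>| \<le> |\<nabla>f\<^sub>\<beta>(x)| / \<mu>.  The (1,2)-norm of a row is its largest entry in absolute value. *)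

section \<open>Taylor expansion and strong convexity\<close>

lemma has_vector_derivative_along_line:
  fixes F :: "'a::real_normed_vector \<Rightarrow> 'b::real_normed_vector"
  assumes "(F has_derivative F') (at (y + t *\<^sub>R w))"
  shows "((\<lambda>s. F (y + s *\<^sub>R w)) has_vector_derivative F' w) (at t)"
proof -
  have "((\<lambda>s. y + s *\<^sub>R w) has_derivative (\<lambda>s. s *\<^sub>R w)) (at t)"
    by (auto intro!: derivative_eq_intros)
  from has_derivative_compose[OF this assms] show ?thesis
    using linear.scaleR[OF has_derivative_linear[OF assms]]
    by (simp add: has_vector_derivative_def o_def)
qed

lemma taylor_second_order_along_segment:
  fixes \<phi> :: "'a::real_inner \<Rightarrow> real"
  assumes grad: "\<And>y. (\<phi> has_derivative (\<lambda>h. G y \<bullet> h)) (at y)"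
    and hess: "\<And>y. (G has_derivative D2 y) (at y)"
  shows "\<exists>t. 0 < t \<and> t < 1 \<and>
           \<phi> z = \<phi> y + G y \<bullet> (z - y) + (z - y) \<bullet> D2 (y + t *\<^sub>R (z - y)) (z - y) / 2"
proof -
  define w where "w = z - y"
  define diff :: "nat \<Rightarrow> real \<Rightarrow> real" where
    "diff = (\<lambda>m t. if m = 0 then \<phi> (y + t *\<^sub>R w)
                       else if m = 1 then G (y + t *\<^sub>R w) \<bullet> w else w \<bullet> D2 (y + t *\<^sub>R w) w)"
  have "DERIV (diff m) t :> diff (Suc m) t" if "m < 2" for m t
  proof -
    have "m = 0 \<or> m = 1" using that by auto
    then show ?thesis
    proof
      assume "m = 0"
      with has_vector_derivative_along_line[OF grad] show ?thesis
        by (simp add: diff_def has_real_derivative_iff_has_vector_derivative)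
    next
      assume "m = 1"
      have "((\<lambda>s. G (y + s *\<^sub>R w) \<bullet> w) has_vector_derivative D2 (y + t *\<^sub>R w) w \<bullet> w) (at t)"
        using has_vector_derivative_along_line[OF hess]
        by (auto intro!: derivative_eq_intros simp: has_vector_derivative_def)
      with \<open>m = 1\<close> show ?thesis
        by (simp add: diff_def has_real_derivative_iff_has_vector_derivative inner_commute)
    qed
  qed
  with Maclaurin[of 1 2 diff "\<lambda>t. \<phi> (y + t *\<^sub>R w)"]
  obtain t where "0 < t" "t < 1"
    "\<phi> (y + w) = (\<Sum>m<2. diff m 0 / fact m) + diff 2 t / 2"
    by (auto simp: diff_def)
  moreover have "(\<Sum>m<2. diff m 0 / fact m) = \<phi> y + G y \<bullet> w"
    by (simp add: diff_def numeral_2_eq_2)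
  ultimately show ?thesis by (intro exI[of _ t]) (auto simp: diff_def w_def)
qed

definition strongly_convex_with_gradient :: "real \<Rightarrow> ('a::real_inner \<Rightarrow> real) \<Rightarrow> ('a \<Rightarrow> 'a) \<Rightarrow> bool"
  where "strongly_convex_with_gradient c \<phi> G \<longleftrightarrow>
           (\<forall>y z. \<phi> y + G y \<bullet> (z - y) + c / 2 * (norm (z - y))\<^sup>2 \<le> \<phi> z)"

lemma strongly_convex_with_gradientD:
  "strongly_convex_with_gradient c \<phi> G \<Longrightarrow> \<phi> y + G y \<bullet> (z - y) + c / 2 * (norm (z - y))\<^sup>2 \<le> \<phi> z"
  unfolding strongly_convex_with_gradient_def by blast

lemma strongly_convex_with_gradient_monotone:
  assumes "strongly_convex_with_gradient c \<phi> G"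
  shows "c * (norm (a - b))\<^sup>2 \<le> (G a - G b) \<bullet> (a - b)"
proof -
  have "\<phi> a + G a \<bullet> (b - a) + c / 2 * (norm (b - a))\<^sup>2 \<le> \<phi> b"
    and "\<phi> b + G b \<bullet> (a - b) + c / 2 * (norm (a - b))\<^sup>2 \<le> \<phi> a"
    using assms by (auto dest: strongly_convex_with_gradientD)
  moreover have "norm (b - a) = norm (a - b)" by (rule norm_minus_commute)
  moreover have "G a \<bullet> (b - a) = - (G a \<bullet> (a - b))"
    by (metis inner_minus_right minus_diff_eq)
  ultimately show ?thesis by (simp add: inner_diff_left)
qed

lemma strongly_convex_with_gradient_dist_le:
  assumes "strongly_convex_with_gradient c \<phi> G" "0 < c" "G x\<^sub>0 = 0"
  shows "c * norm (x - x\<^sub>0) \<le> norm (G x)"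
proof (cases "x = x\<^sub>0")
  case False
  have "c * (norm (x - x\<^sub>0))\<^sup>2 \<le> G x \<bullet> (x - x\<^sub>0)"
    using strongly_convex_with_gradient_monotone[OF assms(1), of x x\<^sub>0] assms(3) by simp
  also have "\<dots> \<le> norm (G x) * norm (x - x\<^sub>0)" by (rule norm_cauchy_schwarz)
  finally show ?thesis using False by (simp add: power2_eq_square)
qed simp

lemma strongly_convex_with_gradient_argmin:
  assumes "strongly_convex_with_gradient c \<phi> G" "0 < c" "G x = 0"
  shows "(THE x. \<forall>y. \<phi> x \<le> \<phi> y) = x"
proof (rule the_equality)
  have lower: "\<phi> x + c / 2 * (norm (y - x))\<^sup>2 \<le> \<phi> y" for y
    using strongly_convex_with_gradientD[OF assms(1), of x y] assms(3) by simp
  moreover have "0 \<le> c / 2 * (norm (y - x))\<^sup>2" for y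
    using \<open>0 < c\<close> by simp
  ultimately show "\<forall>y. \<phi> x \<le> \<phi> y"
    by (meson add_increasing2 order_trans order_refl)
  fix x' assume "\<forall>y. \<phi> x' \<le> \<phi> y"
  then have "\<phi> x' \<le> \<phi> x" by blast
  with lower[of x'] have "c / 2 * (norm (x' - x))\<^sup>2 \<le> 0" by linarith
  with \<open>0 < c\<close> show "x' = x" by (simp add: mult_le_0_iff)
qed

lemma strongly_convex_with_gradient_has_critical_point:
  fixes \<phi> :: "'a::euclidean_space \<Rightarrow> real"
  assumes sc: "strongly_convex_with_gradient c \<phi> G" and "0 < c"
    and deriv: "\<And>y. (\<phi> has_derivative (\<lambda>h. G y \<bullet> h)) (at y)"
  shows "\<exists>x. G x = 0"
proof -
  define r where "r = 2 * norm (G 0) / c"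
  have "0 \<le> r" using \<open>0 < c\<close> by (simp add: r_def)
  have "continuous_on UNIV \<phi>"
    by (intro continuous_at_imp_continuous_on ballI has_derivative_continuous[OF deriv])
  then obtain x where min_ball: "\<forall>y\<in>cball 0 r. \<phi> x \<le> \<phi> y"
    using continuous_attains_inf[OF compact_cball, of 0 r] \<open>0 \<le> r\<close>
    by (auto intro: continuous_on_subset)
  \<comment> \<open>outside the ball, the quadratic growth beats the linear term\<close>
  have "\<phi> x \<le> \<phi> y" for y
  proof (cases "y \<in> cball 0 r")
    case False
    then have "norm (G 0) \<le> c / 2 * norm y"
      using \<open>0 < c\<close> by (simp add: r_def field_simps)
    then have "norm (G 0) * norm y \<le> c / 2 * norm y * norm y"
      by (rule mult_right_mono) simp
    then have "norm (G 0) * norm y \<le> c / 2 * (norm y)\<^sup>2"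
      by (simp add: power2_eq_square)
    moreover have "- (norm (G 0) * norm y) \<le> G 0 \<bullet> y"
      using norm_cauchy_schwarz[of "- G 0" y] by simp
    moreover have "\<phi> 0 + G 0 \<bullet> (y - 0) + c / 2 * (norm (y - 0))\<^sup>2 \<le> \<phi> y"
      by (rule strongly_convex_with_gradientD[OF sc])
    moreover have "\<phi> x \<le> \<phi> 0" using min_ball \<open>0 \<le> r\<close> by simp
    ultimately show ?thesis by simp
  qed (use min_ball in simp)
  then have "(\<lambda>h. G x \<bullet> h) = (\<lambda>h. 0)"
    by (intro differential_zero_maxmin[of x UNIV, OF _ _ deriv]) auto
  then have "G x \<bullet> G x = 0" by (rule fun_cong)
  then show ?thesis by auto
qed

lemma strongly_convex_with_gradient_argmin_critical:
  fixes \<phi> :: "'a::euclidean_space \<Rightarrow> real"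
  assumes "strongly_convex_with_gradient c \<phi> G" "0 < c"
    and "\<And>y. (\<phi> has_derivative (\<lambda>h. G y \<bullet> h)) (at y)"
  shows "G (THE x. \<forall>y. \<phi> x \<le> \<phi> y) = 0"
  using strongly_convex_with_gradient_has_critical_point[OF assms]
    strongly_convex_with_gradient_argmin[OF assms(1,2)] by metis

lemma convex_smooth_gradient_cocoercive:
  fixes \<phi> :: "'a::real_inner \<Rightarrow> real"
  assumes "0 < L"
    and convex: "\<And>y z. \<phi> y + G y \<bullet> (z - y) \<le> \<phi> z"
    and smooth: "\<And>y z. \<phi> z \<le> \<phi> y + G y \<bullet> (z - y) + L / 2 * (norm (z - y))\<^sup>2"
  shows "\<phi> a + G a \<bullet> (b - a) + (norm (G b - G a))\<^sup>2 / (2 * L) \<le> \<phi> b"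
proof -
  \<comment> \<open>evaluate both bounds at the gradient step \<open>z\<close> taken from \<open>b\<close>\<close>
  define d where "d = G b - G a"
  define z where "z = b - (1 / L) *\<^sub>R d"
  have "\<phi> a + G a \<bullet> (z - a) \<le> \<phi> z" by (rule convex)
  also have "\<phi> z \<le> \<phi> b + G b \<bullet> (z - b) + L / 2 * (norm (z - b))\<^sup>2" by (rule smooth)
  finally have "\<phi> a + G a \<bullet> (z - a) \<le> \<phi> b + G b \<bullet> (z - b) + L / 2 * (norm (z - b))\<^sup>2" .
  moreover have "G a \<bullet> (z - a) = G a \<bullet> (b - a) - (G a \<bullet> d) / L"
    by (simp add: z_def inner_diff_right algebra_simps)
  moreover have "G b \<bullet> (z - b) = - (G b \<bullet> d) / L" by (simp add: z_def)
  moreover have "L / 2 * (norm (z - b))\<^sup>2 = (norm d)\<^sup>2 / (2 * L)"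
    using \<open>0 < L\<close> by (simp add: z_def power2_eq_square)
  moreover have "G b \<bullet> d - G a \<bullet> d = (norm d)\<^sup>2"
    by (simp add: d_def power2_norm_eq_inner inner_diff_left)
  then have "(G b \<bullet> d) / L - (G a \<bullet> d) / L = 2 * ((norm d)\<^sup>2 / (2 * L))"
    by (simp add: diff_divide_distrib[symmetric])
  ultimately show ?thesis unfolding d_def by linarith
qed

lemma convex_smooth_gradient_lipschitz:
  fixes \<phi> :: "'a::real_inner \<Rightarrow> real"
  assumes "0 < L"
    and convex: "\<And>y z. \<phi> y + G y \<bullet> (z - y) \<le> \<phi> z"
    and smooth: "\<And>y z. \<phi> z \<le> \<phi> y + G y \<bullet> (z - y) + L / 2 * (norm (z - y))\<^sup>2"
  shows "norm (G a - G b) \<le> L * norm (a - b)"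
proof (cases "G a = G b")
  case False
  note cocoercive = convex_smooth_gradient_cocoercive[OF assms]
  have "(norm (G a - G b))\<^sup>2 / L \<le> (G a - G b) \<bullet> (a - b)"
    using cocoercive[of a b] cocoercive[of b a] \<open>0 < L\<close>
    by (simp add: norm_minus_commute inner_diff_left inner_diff_right add_divide_distrib[symmetric]
        algebra_simps)
  also have "\<dots> \<le> norm (G a - G b) * norm (a - b)" by (rule norm_cauchy_schwarz)
  finally show ?thesis
    using False \<open>0 < L\<close> by (simp add: power2_eq_square divide_le_eq mult.commute)
qed (use assms(1) in simp)

section \<open>Weights, matrices and the (1,2)-norm\<close>

lemma simplex_weighted_sum_lower:
  assumes "\<beta> \<in> prob_simplex" "\<And>i. a \<le> q i"
  shows "a \<le> (\<Sum>i\<in>UNIV. \<beta>$i * q i)"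
proof -
  have "a = (\<Sum>i\<in>UNIV. \<beta>$i * a)"
    using assms(1) by (simp add: prob_simplex_def sum_distrib_right[symmetric])
  also have "\<dots> \<le> (\<Sum>i\<in>UNIV. \<beta>$i * q i)"
    using assms by (intro sum_mono mult_left_mono) (auto simp: prob_simplex_def)
  finally show ?thesis .
qed

lemma norm_sum_scaleR_le_l1norm:
  fixes v :: "'n::finite \<Rightarrow> 'a::real_normed_vector"
  assumes "\<And>i. norm (v i) \<le> B"
  shows "norm (\<Sum>i\<in>UNIV. h$i *\<^sub>R v i) \<le> l1norm h * B"
proof -
  have "norm (\<Sum>i\<in>UNIV. h$i *\<^sub>R v i) \<le> (\<Sum>i\<in>UNIV. \<bar>h$i\<bar> * norm (v i))"
    by (rule norm_sum[THEN order_trans]) simp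
  also have "\<dots> \<le> (\<Sum>i\<in>UNIV. \<bar>h$i\<bar> * B)"
    by (intro sum_mono mult_left_mono assms) simp
  finally show ?thesis by (simp add: l1norm_def sum_distrib_right)
qed

lemma weighted_sum_lower_near_simplex:
  assumes "\<beta> \<in> prob_simplex" "l1norm (\<beta>' - \<beta>) \<le> \<epsilon>"
    and "\<And>i. a \<le> q i" "\<And>i. q i \<le> b" "0 \<le> a"
  shows "a - \<epsilon> * b \<le> (\<Sum>i\<in>UNIV. \<beta>'$i * q i)"
proof -
  have "\<bar>\<Sum>i\<in>UNIV. (\<beta>' - \<beta>)$i * q i\<bar> \<le> l1norm (\<beta>' - \<beta>) * b"
  proof -
    have "norm (q i) \<le> b" for i using assms(3)[of i] assms(4)[of i] assms(5) by simp
    from norm_sum_scaleR_le_l1norm[of q, OF this, of "\<beta>' - \<beta>"] show ?thesis by simp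
  qed
  also have "\<dots> \<le> \<epsilon> * b"
    using assms(2) assms(3,4)[of undefined] assms(5) by (intro mult_right_mono) linarith+
  finally have "- (\<epsilon> * b) \<le> (\<Sum>i\<in>UNIV. (\<beta>' - \<beta>)$i * q i)" by linarith
  moreover have "a \<le> (\<Sum>i\<in>UNIV. \<beta>$i * q i)" using assms(1,3) by (rule simplex_weighted_sum_lower)
  moreover have "(\<Sum>i\<in>UNIV. \<beta>'$i * q i) = (\<Sum>i\<in>UNIV. \<beta>$i * q i) + (\<Sum>i\<in>UNIV. (\<beta>' - \<beta>)$i * q i)"
    by (simp add: sum.distrib[symmetric] algebra_simps)
  ultimately show ?thesis by linarith
qed

lemma l1norm_le_card_norm: "l1norm h \<le> real CARD('n::finite) * norm (h :: real^'n)"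
proof -
  have "l1norm h \<le> (\<Sum>i\<in>(UNIV::'n set). norm h)"
    unfolding l1norm_def by (intro sum_mono component_le_norm_cart)
  then show ?thesis by simp
qed

lemma tendsto_l1norm_diff: "((\<lambda>\<beta>'. l1norm (\<beta>' - \<beta>)) \<longlongrightarrow> 0) (at \<beta>)"
proof -
  have "((\<lambda>\<beta>'. l1norm (\<beta>' - \<beta>)) \<longlongrightarrow> l1norm (\<beta> - \<beta>)) (at \<beta>)"
    unfolding l1norm_def by (intro tendsto_intros)
  then show ?thesis by (simp add: l1norm_def)
qed

lemma hess_beta_mult_vec: "hess_beta H \<beta> y *v v = (\<Sum>i\<in>UNIV. \<beta>$i *\<^sub>R (H i y *v v))"
proof -
  have "(\<Sum>j\<in>UNIV. (\<Sum>i\<in>UNIV. \<beta>$i * H i y $ k $ j) * v $ j)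
      = (\<Sum>i\<in>UNIV. \<beta>$i * (\<Sum>j\<in>UNIV. H i y $ k $ j * v $ j))" for k
    by (simp add: sum_distrib_left sum_distrib_right mult.assoc) (rule sum.swap)
  then show ?thesis
    by (simp add: hess_beta_def vec_eq_iff matrix_vector_mult_def sum_component)
qed

lemma hat_grad_xstar_mult_vec:
  "hat_grad_xstar g H y \<beta> *v h = - (matrix_inv (hess_beta H \<beta> y) *v (\<Sum>i\<in>UNIV. h$i *\<^sub>R g i y))"
proof -
  have neg: "(- M) *v v = - (M *v v)" for M :: "real^'n^'d" and v
    by (simp add: vec_eq_iff matrix_vector_mult_def sum_negf)
  have jac: "transpose (jac g y) *v h = (\<Sum>i\<in>UNIV. h$i *\<^sub>R g i y)"
    by (simp add: vec_eq_iff vector_matrix_mult_def jac_def sum_component mult.commute)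
  show ?thesis
    unfolding hat_grad_xstar_def neg matrix_vector_mul_assoc[symmetric] jac ..
qed

lemma sum_axis_scaleR: "(\<Sum>i\<in>UNIV. axis j (1::real) $ i *\<^sub>R v i) = (v j :: 'a::real_vector)"
proof -
  have "(\<Sum>i\<in>UNIV. axis j (1::real) $ i *\<^sub>R v i) = (\<Sum>i\<in>UNIV. if i = j then v i else 0)"
    by (intro sum.cong) (auto simp: axis_def)
  then show ?thesis by simp
qed

lemma positive_definite_matrix_inv:
  fixes A :: "real^'d::finite^'d"
  assumes "0 < \<mu>" and pd: "\<And>v. \<mu> * (v \<bullet> v) \<le> v \<bullet> (A *v v)"
  shows "A ** matrix_inv A = mat 1" "matrix_inv A ** A = mat 1"
proof -
  have "x = 0" if "A *v x = 0" for x
    using pd[of x] that \<open>0 < \<mu>\<close> by (simp add: mult_le_0_iff power2_norm_eq_inner[symmetric])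
  then have "invertible A"
    using matrix_left_invertible_ker invertible_left_inverse by blast
  then have "A ** matrix_inv A = mat 1 \<and> matrix_inv A ** A = mat 1"
    unfolding matrix_inv_def invertible_def by (rule someI_ex)
  then show "A ** matrix_inv A = mat 1" "matrix_inv A ** A = mat 1" by simp_all
qed

lemma positive_definite_matrix_inv_mult_vec:
  fixes A :: "real^'d::finite^'d"
  assumes "0 < \<mu>" and "\<And>v. \<mu> * (v \<bullet> v) \<le> v \<bullet> (A *v v)"
  shows "A *v (matrix_inv A *v w) = w" "matrix_inv A *v (A *v w) = w"
  using positive_definite_matrix_inv[OF assms] by (simp_all add: matrix_vector_mul_assoc)

lemma positive_definite_norm_matrix_inv_le:
  fixes A :: "real^'d::finite^'d"
  assumes "0 < \<mu>" and pd: "\<And>v. \<mu> * (v \<bullet> v) \<le> v \<bullet> (A *v v)"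
  shows "norm (matrix_inv A *v w) \<le> norm w / \<mu>"
proof -
  define v where "v = matrix_inv A *v w"
  have "\<mu> * (norm v)\<^sup>2 \<le> v \<bullet> w"
    using pd[of v] positive_definite_matrix_inv_mult_vec(1)[OF assms]
    by (simp add: v_def power2_norm_eq_inner)
  also have "\<dots> \<le> norm v * norm w" by (rule norm_cauchy_schwarz)
  finally have "\<mu> * norm v \<le> norm w"
    by (cases "v = 0") (simp_all add: power2_eq_square)
  with \<open>0 < \<mu>\<close> show ?thesis by (simp add: v_def field_simps)
qed

lemma positive_definite_matrix_inv_perturbation:
  fixes A A' :: "real^'d::finite^'d"
  assumes "0 < \<mu>"
    and pd: "\<And>v. \<mu> * (v \<bullet> v) \<le> v \<bullet> (A *v v)"
    and pd': "\<And>v. \<mu> * (v \<bullet> v) \<le> v \<bullet> (A' *v v)"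
  shows "norm (matrix_inv A' *v q - matrix_inv A *v p)
           \<le> (norm (q - p) + norm ((A - A') *v (matrix_inv A *v p))) / \<mu>"
proof -
  define u where "u = matrix_inv A *v p"
  have "matrix_inv A' *v q - u = matrix_inv A' *v (q - p + (A - A') *v u)"
    using positive_definite_matrix_inv_mult_vec[OF \<open>0 < \<mu>\<close> pd, of p]
      positive_definite_matrix_inv_mult_vec(2)[OF \<open>0 < \<mu>\<close> pd', of u]
    by (simp add: u_def matrix_vector_mult_diff_distrib matrix_vector_mult_diff_rdistrib)
  also have "norm \<dots> \<le> norm (q - p + (A - A') *v u) / \<mu>"
    by (rule positive_definite_norm_matrix_inv_le[OF \<open>0 < \<mu>\<close> pd'])
  also have "\<dots> \<le> (norm (q - p) + norm ((A - A') *v u)) / \<mu>"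
    using \<open>0 < \<mu>\<close> by (intro divide_right_mono norm_triangle_ineq) simp
  finally show ?thesis by (simp add: u_def)
qed

lemma axis_in_prob_simplex: "axis j 1 \<in> prob_simplex"
  by (simp add: prob_simplex_def axis_def)

lemma hess_beta_lipschitz:
  assumes "\<beta> \<in> prob_simplex"
    and lip: "\<And>i y z. onorm (\<lambda>v. (H i y - H i z) *v v) \<le> L\<^sub>H * norm (y - z)"
  shows "norm ((hess_beta H \<beta> y - hess_beta H \<beta> z) *v v) \<le> L\<^sub>H * norm (y - z) * norm v"
proof -
  have "(hess_beta H \<beta> y - hess_beta H \<beta> z) *v v = (\<Sum>i\<in>UNIV. \<beta>$i *\<^sub>R ((H i y - H i z) *v v))"
    by (simp add: matrix_vector_mult_diff_rdistrib hess_beta_mult_vec sum_subtractf[symmetric]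
        scaleR_diff_right)
  also have "norm \<dots> \<le> (\<Sum>i\<in>UNIV. \<beta>$i * norm ((H i y - H i z) *v v))"
    using assms(1) by (auto simp: prob_simplex_def intro!: norm_sum[THEN order_trans])
  also have "\<dots> \<le> (\<Sum>i\<in>UNIV. \<beta>$i * (L\<^sub>H * norm (y - z) * norm v))"
  proof (intro sum_mono mult_left_mono)
    show "norm ((H i y - H i z) *v v) \<le> L\<^sub>H * norm (y - z) * norm v" for i
      using onorm[of "\<lambda>v. (H i y - H i z) *v v" v] lip[of i y z]
      by (simp add: mult_right_mono order_trans)
  qed (use assms(1) in \<open>auto simp: prob_simplex_def\<close>)
  also have "\<dots> = L\<^sub>H * norm (y - z) * norm v"
    using assms(1) by (simp add: prob_simplex_def sum_distrib_right[symmetric])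
  finally show ?thesis .
qed

lemma norm12_rowmat_le:
  assumes "\<And>j. \<bar>a$j\<bar> \<le> C"
  shows "norm12 (rowmat a) \<le> C"
  unfolding norm12_def
proof (rule cSup_least)
  have "l1norm (axis undefined (1::real) :: real^'n) = 1" by (simp add: l1norm_def axis_def)
  then show "{norm (rowmat a *v z) |z. l1norm z = 1} \<noteq> {}" by blast
  fix r assume "r \<in> {norm (rowmat a *v z) |z. l1norm z = 1}"
  then obtain z where z: "l1norm z = 1" and r: "r = norm (rowmat a *v z)" by blast
  have "norm (rowmat a *v z) = \<bar>\<Sum>j\<in>UNIV. a$j * z$j\<bar>"
    by (simp add: rowmat_def matrix_vector_mult_def norm_vec_def L2_set_def)
  also have "\<dots> \<le> (\<Sum>j\<in>UNIV. C * \<bar>z$j\<bar>)"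
    by (rule sum_abs[THEN order_trans], intro sum_mono) (simp add: abs_mult assms mult_right_mono)
  also have "\<dots> = C" using z by (simp add: l1norm_def sum_distrib_left[symmetric])
  finally show "r \<le> C" using r by simp
qed

lemma row_of_inner_mult_vec: "row_of (\<lambda>h. u \<bullet> (M *v h)) = rowmat (u v* M)"
  by (simp add: row_of_def rowmat_def vec_eq_iff dot_lmul_matrix[symmetric] inner_axis)

lemma vector_matrix_mult_hat_grad_xstar_nth:
  "(u v* hat_grad_xstar g H y \<beta>)$j = - (u \<bullet> (matrix_inv (hess_beta H \<beta> y) *v g j y))"
proof -
  have "(u v* hat_grad_xstar g H y \<beta>)$j = u \<bullet> (hat_grad_xstar g H y \<beta> *v axis j 1)"
    by (simp add: inner_axis dot_lmul_matrix[symmetric])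
  then show ?thesis by (simp add: hat_grad_xstar_mult_vec sum_axis_scaleR)
qed

lemma lipschitz_constant_nonneg:
  fixes c :: "real^'d::finite \<Rightarrow> real^'d \<Rightarrow> real"
  assumes "\<And>y z. 0 \<le> c y z" "\<And>y z. c y z \<le> K * norm (y - z)"
  shows "0 \<le> K"
  using assms[of "axis undefined 1" 0] order_trans by fastforce

section \<open>The minimiser map of a smooth strongly convex family\<close>

locale smooth_strongly_convex_family =
  fixes f :: "'n::finite \<Rightarrow> real^'d::finite \<Rightarrow> real"
    and g :: "'n \<Rightarrow> real^'d \<Rightarrow> real^'d"
    and H :: "'n \<Rightarrow> real^'d \<Rightarrow> real^'d^'d"
    and \<mu> L :: real
  assumes mu_pos: "0 < \<mu>" and mu_le_L: "\<mu> \<le> L"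
    and grad: "\<And>i y. (f i has_derivative (\<lambda>h. g i y \<bullet> h)) (at y)"
    and hess: "\<And>i y. (g i has_derivative (\<lambda>h. H i y *v h)) (at y)"
    and hess_lower: "\<And>i y v. \<mu> * (v \<bullet> v) \<le> v \<bullet> (H i y *v v)"
    and hess_upper: "\<And>i y v. v \<bullet> (H i y *v v) \<le> L * (v \<bullet> v)"
begin

lemma L_pos: "0 < L"
  using mu_pos mu_le_L by simp

lemma quadratic_bounds:
  "f i y + g i y \<bullet> (z - y) + \<mu> / 2 * (norm (z - y))\<^sup>2 \<le> f i z"
  "f i z \<le> f i y + g i y \<bullet> (z - y) + L / 2 * (norm (z - y))\<^sup>2"
proof -
  obtain t where "f i z = f i y + g i y \<bullet> (z - y) + (z - y) \<bullet> (H i (y + t *\<^sub>R (z - y)) *v (z - y)) / 2"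
    using taylor_second_order_along_segment[OF grad hess, of i z y] by blast
  moreover note hess_lower[where i = i and y = "y + t *\<^sub>R (z - y)" and v = "z - y"]
    hess_upper[where i = i and y = "y + t *\<^sub>R (z - y)" and v = "z - y"]
  ultimately show "f i y + g i y \<bullet> (z - y) + \<mu> / 2 * (norm (z - y))\<^sup>2 \<le> f i z"
    "f i z \<le> f i y + g i y \<bullet> (z - y) + L / 2 * (norm (z - y))\<^sup>2"
    by (simp_all add: power2_norm_eq_inner)
qed

lemma gradient_lipschitz: "norm (g i a - g i b) \<le> L * norm (a - b)"
proof (rule convex_smooth_gradient_lipschitz[OF L_pos])
  show "f i y + g i y \<bullet> (z - y) \<le> f i z" for y z
  proof -
    have "0 \<le> \<mu> / 2 * (norm (z - y))\<^sup>2" using mu_pos by simp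
    with quadratic_bounds(1)[of i y z] show ?thesis by linarith
  qed
qed (rule quadratic_bounds(2))

lemma fbeta_has_derivative: "(fbeta f \<beta> has_derivative (\<lambda>h. grad_beta g \<beta> y \<bullet> h)) (at y)"
proof -
  have "((\<lambda>x. \<Sum>i\<in>UNIV. \<beta>$i * f i x) has_derivative (\<lambda>h. \<Sum>i\<in>UNIV. \<beta>$i * (g i y \<bullet> h))) (at y)"
    by (intro has_derivative_sum has_derivative_mult_right grad)
  then show ?thesis
    by (simp add: fbeta_def[abs_def] grad_beta_def inner_sum_left)
qed

lemma grad_beta_has_derivative: "(grad_beta g \<beta> has_derivative (\<lambda>h. hess_beta H \<beta> y *v h)) (at y)"
proof -
  have "((\<lambda>x. \<Sum>i\<in>UNIV. \<beta>$i *\<^sub>R g i x) has_derivative (\<lambda>h. \<Sum>i\<in>UNIV. \<beta>$i *\<^sub>R (H i y *v h))) (at y)"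
    by (intro has_derivative_sum has_derivative_scaleR_right hess)
  then show ?thesis by (simp add: grad_beta_def[abs_def] hess_beta_mult_vec)
qed

lemma hess_beta_lower:
  assumes "\<beta> \<in> prob_simplex"
  shows "\<mu> * (v \<bullet> v) \<le> v \<bullet> (hess_beta H \<beta> y *v v)"
proof -
  have "\<mu> * (v \<bullet> v) \<le> (\<Sum>i\<in>UNIV. \<beta>$i * (v \<bullet> (H i y *v v)))"
    using assms hess_lower by (rule simplex_weighted_sum_lower)
  also have "\<dots> = v \<bullet> (hess_beta H \<beta> y *v v)"
    by (simp add: hess_beta_mult_vec inner_sum_right)
  finally show ?thesis .
qed

text \<open>\<open>x\<^sup>*\<close> is differentiated at \<open>\<beta>\<close> in all of \<open>\<real>\<^sup>n\<close>, so weights near but off the simplex,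
  possibly negative, have to be handled.\<close>
lemma fbeta_strongly_convex_near_simplex:
  assumes "\<beta> \<in> prob_simplex" "l1norm (\<beta>' - \<beta>) \<le> \<epsilon>"
  shows "strongly_convex_with_gradient (\<mu> - \<epsilon> * L) (fbeta f \<beta>') (grad_beta g \<beta>')"
  unfolding strongly_convex_with_gradient_def
proof (intro allI)
  fix y z
  define q where "q i = f i z - f i y - g i y \<bullet> (z - y)" for i
  have "\<mu> / 2 * (norm (z - y))\<^sup>2 - \<epsilon> * (L / 2 * (norm (z - y))\<^sup>2) \<le> (\<Sum>i\<in>UNIV. \<beta>'$i * q i)"
  proof (rule weighted_sum_lower_near_simplex[OF assms])
    show "\<mu> / 2 * (norm (z - y))\<^sup>2 \<le> q i" for i
      using quadratic_bounds(1)[of i y z] unfolding q_def by linarith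
    show "q i \<le> L / 2 * (norm (z - y))\<^sup>2" for i
      using quadratic_bounds(2)[where i = i and y = y and z = z] unfolding q_def by linarith
  qed (use mu_pos in simp)
  moreover have "(\<Sum>i\<in>UNIV. \<beta>'$i * q i) = fbeta f \<beta>' z - fbeta f \<beta>' y - grad_beta g \<beta>' y \<bullet> (z - y)"
    by (simp add: q_def fbeta_def grad_beta_def inner_sum_left sum_subtractf right_diff_distrib)
  ultimately show "fbeta f \<beta>' y + grad_beta g \<beta>' y \<bullet> (z - y) + (\<mu> - \<epsilon> * L) / 2 * (norm (z - y))\<^sup>2
      \<le> fbeta f \<beta>' z"
    by (simp add: left_diff_distrib diff_divide_distrib)
qed

lemma fbeta_strongly_convex:
  "\<beta> \<in> prob_simplex \<Longrightarrow> strongly_convex_with_gradient \<mu> (fbeta f \<beta>) (grad_beta g \<beta>)"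
  using fbeta_strongly_convex_near_simplex[of \<beta> \<beta> 0] by (simp add: l1norm_def)

lemma fbeta_strongly_convex_near_simplex_half:
  assumes "\<beta> \<in> prob_simplex" "l1norm (\<beta>' - \<beta>) \<le> \<mu> / (2 * L)"
  shows "strongly_convex_with_gradient (\<mu> / 2) (fbeta f \<beta>') (grad_beta g \<beta>')"
proof -
  have "\<mu> - \<mu> / (2 * L) * L = \<mu> / 2" using L_pos by simp
  with fbeta_strongly_convex_near_simplex[OF assms] show ?thesis by (simp only:)
qed

lemma grad_beta_xstar_near_simplex:
  assumes "\<beta> \<in> prob_simplex" "l1norm (\<beta>' - \<beta>) \<le> \<mu> / (2 * L)"
  shows "grad_beta g \<beta>' (xstar f \<beta>') = 0"
proof -
  have "grad_beta g \<beta>' (THE x. \<forall>y. fbeta f \<beta>' x \<le> fbeta f \<beta>' y) = 0"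
    using fbeta_strongly_convex_near_simplex_half[OF assms]
    by (rule strongly_convex_with_gradient_argmin_critical) (use mu_pos fbeta_has_derivative in auto)
  then show ?thesis by (simp add: xstar_def)
qed

lemma grad_beta_xstar: "\<beta> \<in> prob_simplex \<Longrightarrow> grad_beta g \<beta> (xstar f \<beta>) = 0"
  using grad_beta_xstar_near_simplex[of \<beta> \<beta>] mu_pos L_pos by (simp add: l1norm_def)

lemma dist_xstar_le: "\<beta> \<in> prob_simplex \<Longrightarrow> norm (x - xstar f \<beta>) \<le> norm (grad_beta g \<beta> x) / \<mu>"
  using strongly_convex_with_gradient_dist_le[OF fbeta_strongly_convex mu_pos grad_beta_xstar] mu_pos
  by (simp add: field_simps)

lemma f_strongly_convex: "strongly_convex_with_gradient \<mu> (f i) (g i)"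
  unfolding strongly_convex_with_gradient_def using quadratic_bounds(1) by blast

lemma inner_gradient_self_lower: "\<mu> * (norm x)\<^sup>2 - norm (g i 0) * norm x \<le> g i x \<bullet> x"
proof -
  have "\<mu> * (norm x)\<^sup>2 \<le> g i x \<bullet> x - g i 0 \<bullet> x"
    using strongly_convex_with_gradient_monotone[OF f_strongly_convex[of i], of x 0]
    by (simp add: inner_diff_left)
  moreover have "- (norm (g i 0) * norm x) \<le> g i 0 \<bullet> x"
    using norm_cauchy_schwarz[of "- g i 0" x] by simp
  ultimately show ?thesis by linarith
qed

lemma descent_towards_origin:
  assumes "2 * norm (g i 0) / \<mu> < norm x"
  shows "f i (x - (\<mu> / (2 * L)) *\<^sub>R x) < f i x"
proof -
  define t where "t = \<mu> / (2 * L)"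
  define r where "r = (norm x)\<^sup>2"
  have "0 < t" using mu_pos L_pos by (simp add: t_def)
  have "0 \<le> 2 * norm (g i 0) / \<mu>" using mu_pos by simp
  with assms have "0 < norm x" by linarith
  moreover have "norm (g i 0) < \<mu> / 2 * norm x"
    using assms mu_pos by (simp add: pos_divide_less_eq mult.commute)
  ultimately have "norm (g i 0) * norm x < \<mu> / 2 * r"
    by (simp add: r_def power2_eq_square mult_strict_right_mono)
  moreover have "0 \<le> \<mu> / 4 * r" using mu_pos by (simp add: r_def)
  ultimately have "\<mu> / 4 * r < g i x \<bullet> x"
    using inner_gradient_self_lower[of x i] by (simp add: r_def)
  with \<open>0 < t\<close> have "t * (\<mu> / 4 * r) < t * (g i x \<bullet> x)" by simp
  moreover have "f i (x - t *\<^sub>R x) \<le> f i x + g i x \<bullet> ((x - t *\<^sub>R x) - x) + L / 2 * (norm ((x - t *\<^sub>R x) - x))\<^sup>2"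
    by (rule quadratic_bounds(2))
  moreover have "g i x \<bullet> ((x - t *\<^sub>R x) - x) = - (t * (g i x \<bullet> x))" by simp
  moreover have "L / 2 * (norm ((x - t *\<^sub>R x) - x))\<^sup>2 = t * (\<mu> / 4 * r)"
    using L_pos \<open>0 < t\<close> by (simp add: r_def t_def power_mult_distrib power2_eq_square)
  ultimately have "f i (x - t *\<^sub>R x) < f i x" by linarith
  then show ?thesis by (simp add: t_def)
qed

lemma pareto_set_subset_cball: "pareto_set f \<subseteq> cball 0 (2 * (\<Sum>i\<in>UNIV. norm (g i 0)) / \<mu>)"
proof
  fix x assume x: "x \<in> pareto_set f"
  show "x \<in> cball 0 (2 * (\<Sum>i\<in>UNIV. norm (g i 0)) / \<mu>)"
  proof (rule ccontr)
    assume "x \<notin> cball 0 (2 * (\<Sum>i\<in>UNIV. norm (g i 0)) / \<mu>)"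
    then have "2 * (\<Sum>i\<in>UNIV. norm (g i 0)) / \<mu> < norm x" by simp
    moreover have "2 * norm (g i 0) / \<mu> \<le> 2 * (\<Sum>i\<in>UNIV. norm (g i 0)) / \<mu>" for i
      using member_le_sum[of i UNIV "\<lambda>i. norm (g i 0)"] mu_pos by (simp add: divide_right_mono)
    ultimately have "2 * norm (g i 0) / \<mu> < norm x" for i
      by (meson le_less_trans)
    then have "f i (x - (\<mu> / (2 * L)) *\<^sub>R x) < f i x" for i
      by (rule descent_towards_origin)
    then have "(\<forall>i. f i (x - (\<mu> / (2 * L)) *\<^sub>R x) \<le> f i x) \<and> (\<exists>i. f i (x - (\<mu> / (2 * L)) *\<^sub>R x) < f i x)"
      by (auto intro: less_imp_le)
    with x show False unfolding pareto_set_def by blast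
  qed
qed

lemma bounded_pareto_set: "bounded (pareto_set f)"
  using pareto_set_subset_cball bounded_cball bounded_subset by blast

lemma xstar_in_pareto_set:
  assumes "\<beta> \<in> prob_simplex"
  shows "xstar f \<beta> \<in> pareto_set f"
  unfolding pareto_set_def
proof (safe)
  define x where "x = xstar f \<beta>"
  fix y i assume dominated: "\<forall>i. f i y \<le> f i (xstar f \<beta>)" and "f i y < f i (xstar f \<beta>)"
  have "fbeta f \<beta> y \<le> fbeta f \<beta> x"
    unfolding fbeta_def x_def
  proof (intro sum_mono mult_left_mono)
    show "f j y \<le> f j (xstar f \<beta>)" "0 \<le> \<beta>$j" for j
      using dominated assms by (auto simp: prob_simplex_def)
  qed
  moreover have "fbeta f \<beta> x + grad_beta g \<beta> x \<bullet> (y - x) + \<mu> / 2 * (norm (y - x))\<^sup>2 \<le> fbeta f \<beta> y"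
    by (rule strongly_convex_with_gradientD[OF fbeta_strongly_convex[OF assms]])
  moreover have "grad_beta g \<beta> x = 0"
    unfolding x_def by (rule grad_beta_xstar[OF assms])
  ultimately have "\<mu> / 2 * (norm (y - x))\<^sup>2 \<le> 0" by simp
  then have "y = x" using mu_pos by (simp add: mult_le_0_iff)
  with \<open>f i y < f i (xstar f \<beta>)\<close> show False by (simp add: x_def)
qed

lemma grad_beta_axis: "grad_beta g (axis j 1) y = g j y"
  by (simp add: grad_beta_def sum_axis_scaleR)

text \<open>\<open>\<nabla>f\<^sub>j\<close> vanishes at \<open>x\<^sup>*(e\<^sub>j)\<close>, and \<open>x\<^sup>*(e\<^sub>j)\<close> and \<open>x\<^sup>*(\<beta>)\<close> both lie in the Pareto set.\<close>
lemma norm_gradient_at_xstar_le: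
  assumes "\<beta> \<in> prob_simplex"
  shows "norm (g j (xstar f \<beta>)) \<le> L * diameter (pareto_set f)"
proof -
  have "g j (xstar f (axis j 1)) = 0"
    using grad_beta_xstar[OF axis_in_prob_simplex] by (simp add: grad_beta_axis)
  then have "norm (g j (xstar f \<beta>)) \<le> L * norm (xstar f \<beta> - xstar f (axis j 1))"
    using gradient_lipschitz[of j "xstar f \<beta>" "xstar f (axis j 1)"] by simp
  also have "\<dots> \<le> L * diameter (pareto_set f)"
    using diameter_bounded_bound[OF bounded_pareto_set xstar_in_pareto_set[OF assms]
        xstar_in_pareto_set[OF axis_in_prob_simplex]] L_pos
    by (simp add: dist_norm)
  finally show ?thesis .
qed

lemma grad_beta_perturbation:
  "grad_beta g \<beta>' y = grad_beta g \<beta> y + (\<Sum>i\<in>UNIV. (\<beta>' - \<beta>)$i *\<^sub>R g i y)"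
  by (simp add: grad_beta_def sum.distrib[symmetric] scaleR_diff_left)

lemma xstar_lipschitz_at:
  assumes "\<beta> \<in> prob_simplex" "l1norm (\<beta>' - \<beta>) \<le> \<mu> / (2 * L)"
  shows "\<mu> / 2 * norm (xstar f \<beta>' - xstar f \<beta>) \<le> l1norm (\<beta>' - \<beta>) * (\<Sum>i\<in>UNIV. norm (g i (xstar f \<beta>)))"
proof -
  have "\<mu> / 2 * norm (xstar f \<beta> - xstar f \<beta>') \<le> norm (grad_beta g \<beta>' (xstar f \<beta>))"
    using fbeta_strongly_convex_near_simplex_half[OF assms]
    by (rule strongly_convex_with_gradient_dist_le)
      (use mu_pos grad_beta_xstar_near_simplex[OF assms] in auto)
  also have "\<dots> = norm (\<Sum>i\<in>UNIV. (\<beta>' - \<beta>)$i *\<^sub>R g i (xstar f \<beta>))"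
    using grad_beta_perturbation[of \<beta>' "xstar f \<beta>" \<beta>] grad_beta_xstar[OF assms(1)] by simp
  also have "\<dots> \<le> l1norm (\<beta>' - \<beta>) * (\<Sum>i\<in>UNIV. norm (g i (xstar f \<beta>)))"
    by (intro norm_sum_scaleR_le_l1norm member_le_sum) auto
  finally show ?thesis by (simp add: norm_minus_commute)
qed

text \<open>Obtained by subtracting the optimality conditions \<open>\<nabla>f\<^sub>\<beta>\<^sub>'(x\<^sup>*(\<beta>')) = 0\<close> and
  \<open>\<nabla>f\<^sub>\<beta>(x\<^sup>*(\<beta>)) = 0\<close>.\<close>
lemma xstar_linearization_error:
  assumes "\<beta> \<in> prob_simplex" "l1norm (\<beta>' - \<beta>) \<le> \<mu> / (2 * L)"
  defines "x\<^sub>0 \<equiv> xstar f \<beta>" and "x \<equiv> xstar f \<beta>'"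
  shows "norm (x - x\<^sub>0 - hat_grad_xstar g H x\<^sub>0 \<beta> *v (\<beta>' - \<beta>))
           \<le> (norm (grad_beta g \<beta> x - grad_beta g \<beta> x\<^sub>0 - hess_beta H \<beta> x\<^sub>0 *v (x - x\<^sub>0))
              + l1norm (\<beta>' - \<beta>) * (L * norm (x - x\<^sub>0))) / \<mu>"
proof -
  define A where "A = hess_beta H \<beta> x\<^sub>0"
  define w where "w = (\<Sum>i\<in>UNIV. (\<beta>' - \<beta>)$i *\<^sub>R g i x\<^sub>0)"
  define T\<^sub>1 where "T\<^sub>1 = grad_beta g \<beta> x - grad_beta g \<beta> x\<^sub>0 - A *v (x - x\<^sub>0)"
  define T\<^sub>2 where "T\<^sub>2 = (\<Sum>i\<in>UNIV. (\<beta>' - \<beta>)$i *\<^sub>R (g i x - g i x\<^sub>0))"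
  have pd: "\<mu> * (v \<bullet> v) \<le> v \<bullet> (A *v v)" for v
    unfolding A_def by (rule hess_beta_lower[OF assms(1)])
  have "grad_beta g \<beta> x = - (\<Sum>i\<in>UNIV. (\<beta>' - \<beta>)$i *\<^sub>R g i x)"
    using grad_beta_xstar_near_simplex[OF assms(1,2)] grad_beta_perturbation[of \<beta>' x \<beta>]
    by (simp add: x_def eq_neg_iff_add_eq_0)
  moreover have "grad_beta g \<beta> x\<^sub>0 = 0"
    unfolding x\<^sub>0_def by (rule grad_beta_xstar[OF assms(1)])
  moreover have "T\<^sub>2 = (\<Sum>i\<in>UNIV. (\<beta>' - \<beta>)$i *\<^sub>R g i x) - w"
    by (simp add: T\<^sub>2_def w_def scaleR_diff_right sum_subtractf)
  ultimately have "A *v (x - x\<^sub>0) + w = - (T\<^sub>1 + T\<^sub>2)"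
    by (simp add: T\<^sub>1_def)
  moreover have "x - x\<^sub>0 - hat_grad_xstar g H x\<^sub>0 \<beta> *v (\<beta>' - \<beta>) = matrix_inv A *v (A *v (x - x\<^sub>0) + w)"
    by (simp add: hat_grad_xstar_mult_vec A_def[symmetric] w_def matrix_vector_right_distrib
        positive_definite_matrix_inv_mult_vec(2)[OF mu_pos pd])
  ultimately have "norm (x - x\<^sub>0 - hat_grad_xstar g H x\<^sub>0 \<beta> *v (\<beta>' - \<beta>))
      = norm (matrix_inv A *v - (T\<^sub>1 + T\<^sub>2))" by simp
  also have "\<dots> \<le> norm (- (T\<^sub>1 + T\<^sub>2)) / \<mu>"
    by (rule positive_definite_norm_matrix_inv_le[OF mu_pos pd])
  also have "\<dots> \<le> (norm T\<^sub>1 + norm T\<^sub>2) / \<mu>"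
    unfolding norm_minus_cancel using mu_pos norm_triangle_ineq[of T\<^sub>1 T\<^sub>2] by (simp add: divide_right_mono)
  also have "norm T\<^sub>2 \<le> l1norm (\<beta>' - \<beta>) * (L * norm (x - x\<^sub>0))"
    unfolding T\<^sub>2_def by (intro norm_sum_scaleR_le_l1norm gradient_lipschitz)
  finally show ?thesis
    using mu_pos by (simp add: T\<^sub>1_def A_def divide_right_mono)
qed

lemma xstar_lipschitz_eventually:
  assumes \<beta>: "\<beta> \<in> prob_simplex"
  obtains K where "0 < K" "\<forall>\<^sub>F \<beta>' in at \<beta>. norm (xstar f \<beta>' - xstar f \<beta>) \<le> K * norm (\<beta>' - \<beta>)"
proof
  define S where "S = (\<Sum>i\<in>UNIV. norm (g i (xstar f \<beta>)))"
  show "0 < 2 * real CARD('n) * S / \<mu> + 1"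
    using mu_pos by (simp add: S_def sum_nonneg add_nonneg_pos)
  have "\<forall>\<^sub>F \<beta>' in at \<beta>. l1norm (\<beta>' - \<beta>) < \<mu> / (2 * L)"
    by (rule order_tendstoD(2)[OF tendsto_l1norm_diff]) (use mu_pos L_pos in simp)
  then show "\<forall>\<^sub>F \<beta>' in at \<beta>. norm (xstar f \<beta>' - xstar f \<beta>) \<le> (2 * real CARD('n) * S / \<mu> + 1) * norm (\<beta>' - \<beta>)"
  proof (rule eventually_mono)
    fix \<beta>' assume "l1norm (\<beta>' - \<beta>) < \<mu> / (2 * L)"
    then have "\<mu> / 2 * norm (xstar f \<beta>' - xstar f \<beta>) \<le> l1norm (\<beta>' - \<beta>) * S"
      unfolding S_def by (intro xstar_lipschitz_at[OF \<beta>]) simp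
    also have "\<dots> \<le> real CARD('n) * norm (\<beta>' - \<beta>) * S"
      by (intro mult_right_mono l1norm_le_card_norm) (simp add: S_def sum_nonneg)
    finally have "norm (xstar f \<beta>' - xstar f \<beta>) \<le> 2 * real CARD('n) * S / \<mu> * norm (\<beta>' - \<beta>)"
      using mu_pos by (simp add: field_simps)
    then show "norm (xstar f \<beta>' - xstar f \<beta>) \<le> (2 * real CARD('n) * S / \<mu> + 1) * norm (\<beta>' - \<beta>)"
      using norm_ge_zero[of "\<beta>' - \<beta>"] unfolding distrib_right by linarith
  qed
qed

lemma has_derivative_remainder_eventually_le:
  assumes "(F has_derivative F') (at x\<^sub>0)" "(X \<longlongrightarrow> x\<^sub>0) net" "0 < c"
  shows "\<forall>\<^sub>F t in net. norm (F (X t) - F x\<^sub>0 - F' (X t - x\<^sub>0)) \<le> c * norm (X t - x\<^sub>0)"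
proof -
  have "\<forall>\<^sub>F y in at x\<^sub>0. norm (F y - F x\<^sub>0 - F' (y - x\<^sub>0)) \<le> c * norm (y - x\<^sub>0)"
    using assms(1,3) unfolding has_derivative_within_alt2 by blast
  moreover have "F' 0 = 0"
    using assms(1) by (simp add: has_derivative_def linear_simps)
  ultimately have "\<forall>\<^sub>F y in nhds x\<^sub>0. norm (F y - F x\<^sub>0 - F' (y - x\<^sub>0)) \<le> c * norm (y - x\<^sub>0)"
    by (auto simp: eventually_at_filter elim: eventually_mono)
  with assms(2) show ?thesis
    unfolding tendsto_def filterlim_iff by blast
qed

lemma xstar_has_derivative:
  assumes \<beta>: "\<beta> \<in> prob_simplex"
  shows "(xstar f has_derivative (\<lambda>h. hat_grad_xstar g H (xstar f \<beta>) \<beta> *v h)) (at \<beta>)"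
  unfolding has_derivative_within_alt2
proof (intro conjI allI impI)
  show "bounded_linear (\<lambda>h. hat_grad_xstar g H (xstar f \<beta>) \<beta> *v h)" by simp
  define x\<^sub>0 A where "x\<^sub>0 = xstar f \<beta>" and "A = hess_beta H \<beta> x\<^sub>0"
  obtain K where "0 < K" and lipschitz: "\<forall>\<^sub>F \<beta>' in at \<beta>. norm (xstar f \<beta>' - x\<^sub>0) \<le> K * norm (\<beta>' - \<beta>)"
    unfolding x\<^sub>0_def using xstar_lipschitz_eventually[OF \<beta>] .
  have "((\<lambda>\<beta>'. xstar f \<beta>' - x\<^sub>0) \<longlongrightarrow> 0) (at \<beta>)"
    using lipschitz by (rule Lim_null_comparison) (auto intro!: tendsto_eq_intros)
  then have "(xstar f \<longlongrightarrow> x\<^sub>0) (at \<beta>)" by (simp add: LIM_zero_iff)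
  fix e :: real assume "0 < e"
  define c where "c = e * \<mu> / (2 * K)"
  have "0 < c" using \<open>0 < e\<close> mu_pos \<open>0 < K\<close> by (simp add: c_def)
  have "\<forall>\<^sub>F \<beta>' in at \<beta>. l1norm (\<beta>' - \<beta>) < min (c / L) (\<mu> / (2 * L))"
    by (rule order_tendstoD(2)[OF tendsto_l1norm_diff]) (use \<open>0 < c\<close> mu_pos L_pos in simp)
  with has_derivative_remainder_eventually_le[OF grad_beta_has_derivative[of \<beta> x\<^sub>0] \<open>(xstar f \<longlongrightarrow> x\<^sub>0) (at \<beta>)\<close> \<open>0 < c\<close>]
    lipschitz
  show "\<forall>\<^sub>F \<beta>' in at \<beta>. norm (xstar f \<beta>' - xstar f \<beta> - hat_grad_xstar g H (xstar f \<beta>) \<beta> *v (\<beta>' - \<beta>))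
          \<le> e * norm (\<beta>' - \<beta>)"
  proof (eventually_elim)
    case (elim \<beta>')
    define \<delta> where "\<delta> = norm (xstar f \<beta>' - x\<^sub>0)"
    have "l1norm (\<beta>' - \<beta>) * L \<le> c" using elim(3) L_pos by (simp add: field_simps)
    then have cross: "l1norm (\<beta>' - \<beta>) * (L * \<delta>) \<le> c * \<delta>"
      by (metis mult.assoc mult_right_mono norm_ge_zero \<delta>_def)
    have "norm (xstar f \<beta>' - x\<^sub>0 - hat_grad_xstar g H x\<^sub>0 \<beta> *v (\<beta>' - \<beta>))
        \<le> (norm (grad_beta g \<beta> (xstar f \<beta>') - grad_beta g \<beta> x\<^sub>0 - A *v (xstar f \<beta>' - x\<^sub>0))
            + l1norm (\<beta>' - \<beta>) * (L * \<delta>)) / \<mu>"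
      using xstar_linearization_error[OF \<beta>, of \<beta>'] elim(3) unfolding \<delta>_def x\<^sub>0_def A_def by simp
    also have "\<dots> \<le> (c * \<delta> + c * \<delta>) / \<mu>"
      using elim(1) cross mu_pos by (intro divide_right_mono add_mono) (simp_all add: \<delta>_def A_def)
    also have "\<dots> \<le> 2 * c * (K * norm (\<beta>' - \<beta>)) / \<mu>"
      using elim(2) \<open>0 < c\<close> mu_pos by (simp add: \<delta>_def divide_right_mono)
    also have "\<dots> = e * norm (\<beta>' - \<beta>)"
      using \<open>0 < K\<close> mu_pos by (simp add: c_def)
    finally show ?case by (simp add: x\<^sub>0_def)
  qed
qed

lemma row_of_derivative_comp_xstar:
  assumes "\<beta> \<in> prob_simplex" and "\<And>y. (f\<^sub>0 has_derivative (\<lambda>h. g\<^sub>0 y \<bullet> h)) (at y)"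
  shows "(f\<^sub>0 \<circ> xstar f) differentiable (at \<beta>)"
    and "row_of (frechet_derivative (f\<^sub>0 \<circ> xstar f) (at \<beta>))
           = rowmat (g\<^sub>0 (xstar f \<beta>) v* hat_grad_xstar g H (xstar f \<beta>) \<beta>)"
proof -
  have "((f\<^sub>0 \<circ> xstar f) has_derivative (\<lambda>h. g\<^sub>0 (xstar f \<beta>) \<bullet> (hat_grad_xstar g H (xstar f \<beta>) \<beta> *v h))) (at \<beta>)"
    using diff_chain_at[OF xstar_has_derivative[OF assms(1)] assms(2)] by (simp add: o_def)
  then show "(f\<^sub>0 \<circ> xstar f) differentiable (at \<beta>)"
    and "row_of (frechet_derivative (f\<^sub>0 \<circ> xstar f) (at \<beta>))
           = rowmat (g\<^sub>0 (xstar f \<beta>) v* hat_grad_xstar g H (xstar f \<beta>) \<beta>)"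
    by (auto simp: differentiable_def frechet_derivative_at[symmetric] row_of_inner_mult_vec)
qed

lemma norm_inverse_hessian_gradient_at_xstar_le:
  assumes "\<beta> \<in> prob_simplex"
  shows "norm (matrix_inv (hess_beta H \<beta> (xstar f \<beta>)) *v g j (xstar f \<beta>)) \<le> L * diameter (pareto_set f) / \<mu>"
proof -
  have "norm (matrix_inv (hess_beta H \<beta> (xstar f \<beta>)) *v g j (xstar f \<beta>)) \<le> norm (g j (xstar f \<beta>)) / \<mu>"
    using mu_pos hess_beta_lower[OF assms] by (rule positive_definite_norm_matrix_inv_le)
  also have "\<dots> \<le> L * diameter (pareto_set f) / \<mu>"
    using norm_gradient_at_xstar_le[OF assms] mu_pos by (simp add: divide_right_mono)
  finally show ?thesis .
qed

lemma inverse_hessian_gradient_lipschitz_at_xstar: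
  assumes "\<beta> \<in> prob_simplex"
    and hess_lip: "\<And>i y z. onorm (\<lambda>v. (H i y - H i z) *v v) \<le> L\<^sub>H * norm (y - z)"
  defines "x\<^sub>0 \<equiv> xstar f \<beta>" and "R \<equiv> diameter (pareto_set f)"
  shows "norm (matrix_inv (hess_beta H \<beta> x) *v g j x - matrix_inv (hess_beta H \<beta> x\<^sub>0) *v g j x\<^sub>0)
           \<le> L / \<mu> * (1 + L\<^sub>H * R / \<mu>) * norm (x - x\<^sub>0)"
proof -
  define A\<^sub>0 A u\<^sub>0 D where "A\<^sub>0 = hess_beta H \<beta> x\<^sub>0" and "A = hess_beta H \<beta> x"
    and "u\<^sub>0 = matrix_inv A\<^sub>0 *v g j x\<^sub>0" and "D = norm (x - x\<^sub>0)"
  have "norm ((A\<^sub>0 - A) *v u\<^sub>0) \<le> L\<^sub>H * D * norm u\<^sub>0"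
    using hess_beta_lipschitz[where H = H, OF assms(1) hess_lip, of x\<^sub>0 x u\<^sub>0]
    by (simp add: A\<^sub>0_def A_def D_def norm_minus_commute)
  also have "\<dots> \<le> L\<^sub>H * D * (L * R / \<mu>)"
  proof (rule mult_left_mono)
    show "norm u\<^sub>0 \<le> L * R / \<mu>"
      unfolding u\<^sub>0_def A\<^sub>0_def x\<^sub>0_def R_def by (rule norm_inverse_hessian_gradient_at_xstar_le[OF assms(1)])
    show "0 \<le> L\<^sub>H * D"
      using onorm_pos_le[of "\<lambda>v. (H j x - H j x\<^sub>0) *v v"] hess_lip[of j x x\<^sub>0] by (simp add: D_def)
  qed
  finally have perturbation: "norm ((A\<^sub>0 - A) *v u\<^sub>0) \<le> L\<^sub>H * D * (L * R / \<mu>)" .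
  have "norm (matrix_inv A *v g j x - u\<^sub>0) \<le> (norm (g j x - g j x\<^sub>0) + norm ((A\<^sub>0 - A) *v u\<^sub>0)) / \<mu>"
    unfolding u\<^sub>0_def A\<^sub>0_def A_def
    by (rule positive_definite_matrix_inv_perturbation[OF mu_pos hess_beta_lower hess_beta_lower])
      (use assms(1) in simp_all)
  also have "\<dots> \<le> (L * D + L\<^sub>H * D * (L * R / \<mu>)) / \<mu>"
    using gradient_lipschitz[of j x x\<^sub>0] perturbation mu_pos
    by (intro divide_right_mono add_mono) (simp_all add: D_def)
  also have "\<dots> = L / \<mu> * (1 + L\<^sub>H * R / \<mu>) * D"
    using mu_pos by (simp add: field_simps)
  finally show ?thesis by (simp add: u\<^sub>0_def A\<^sub>0_def A_def D_def)
qed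

lemma gradient_inverse_hessian_entry_error:
  assumes "\<beta> \<in> prob_simplex"
    and hess_lip: "\<And>i y z. onorm (\<lambda>v. (H i y - H i z) *v v) \<le> L\<^sub>H * norm (y - z)"
    and g\<^sub>0_lip: "\<And>y z. norm (g\<^sub>0 y - g\<^sub>0 z) \<le> L\<^sub>0 * norm (y - z)"
  defines "x\<^sub>0 \<equiv> xstar f \<beta>" and "R \<equiv> diameter (pareto_set f)"
  shows "\<bar>g\<^sub>0 x\<^sub>0 \<bullet> (matrix_inv (hess_beta H \<beta> x\<^sub>0) *v g j x\<^sub>0) - g\<^sub>0 x \<bullet> (matrix_inv (hess_beta H \<beta> x) *v g j x)\<bar>
     \<le> (L\<^sub>0 * (L * R / \<mu>) + norm (g\<^sub>0 x) * (L / \<mu> * (1 + L\<^sub>H * R / \<mu>))) * norm (x - x\<^sub>0)"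
proof -
  define u\<^sub>0 u D where "u\<^sub>0 = matrix_inv (hess_beta H \<beta> x\<^sub>0) *v g j x\<^sub>0"
    and "u = matrix_inv (hess_beta H \<beta> x) *v g j x" and "D = norm (x - x\<^sub>0)"
  have "\<bar>(g\<^sub>0 x\<^sub>0 - g\<^sub>0 x) \<bullet> u\<^sub>0\<bar> \<le> norm (g\<^sub>0 x\<^sub>0 - g\<^sub>0 x) * norm u\<^sub>0"
    by (rule Cauchy_Schwarz_ineq2)
  also have "\<dots> \<le> (L\<^sub>0 * D) * (L * R / \<mu>)"
  proof (rule mult_mono')
    show "norm (g\<^sub>0 x\<^sub>0 - g\<^sub>0 x) \<le> L\<^sub>0 * D"
      using g\<^sub>0_lip[of x\<^sub>0 x] by (simp add: D_def norm_minus_commute)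
    show "norm u\<^sub>0 \<le> L * R / \<mu>"
      unfolding u\<^sub>0_def x\<^sub>0_def R_def by (rule norm_inverse_hessian_gradient_at_xstar_le[OF assms(1)])
  qed simp_all
  finally have "\<bar>(g\<^sub>0 x\<^sub>0 - g\<^sub>0 x) \<bullet> u\<^sub>0\<bar> \<le> L\<^sub>0 * D * (L * R / \<mu>)" .
  moreover have "\<bar>g\<^sub>0 x \<bullet> (u - u\<^sub>0)\<bar> \<le> norm (g\<^sub>0 x) * norm (u - u\<^sub>0)"
    by (rule Cauchy_Schwarz_ineq2)
  moreover have "norm (g\<^sub>0 x) * norm (u - u\<^sub>0) \<le> norm (g\<^sub>0 x) * (L / \<mu> * (1 + L\<^sub>H * R / \<mu>) * D)"
    using inverse_hessian_gradient_lipschitz_at_xstar[OF assms(1) hess_lip, of x j]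
    unfolding u_def u\<^sub>0_def x\<^sub>0_def R_def D_def by (rule mult_left_mono) simp
  moreover have "g\<^sub>0 x\<^sub>0 \<bullet> u\<^sub>0 - g\<^sub>0 x \<bullet> u = (g\<^sub>0 x\<^sub>0 - g\<^sub>0 x) \<bullet> u\<^sub>0 - g\<^sub>0 x \<bullet> (u - u\<^sub>0)"
    by (simp add: inner_diff_left inner_diff_right)
  ultimately show ?thesis
    unfolding u\<^sub>0_def[symmetric] u_def[symmetric] D_def[symmetric]
    by (simp add: algebra_simps)
qed

lemma derivative_row_error_nth:
  assumes "\<beta> \<in> prob_simplex"
    and hess_lip: "\<And>i y z. onorm (\<lambda>v. (H i y - H i z) *v v) \<le> L\<^sub>H * norm (y - z)"
    and g\<^sub>0_lip: "\<And>y z. norm (g\<^sub>0 y - g\<^sub>0 z) \<le> L\<^sub>0 * norm (y - z)"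
  defines "R \<equiv> diameter (pareto_set f)"
  shows "\<bar>(g\<^sub>0 (xstar f \<beta>) v* hat_grad_xstar g H (xstar f \<beta>) \<beta> - g\<^sub>0 x v* hat_grad_xstar g H x \<beta>)$j\<bar>
     \<le> (L\<^sub>0 * (L * R / \<mu>) + norm (g\<^sub>0 x) * (L / \<mu> * (1 + L\<^sub>H * R / \<mu>))) * (norm (grad_beta g \<beta> x) / \<mu>)"
proof -
  have "0 \<le> L\<^sub>H"
  proof (rule lipschitz_constant_nonneg[of "\<lambda>y z. onorm (\<lambda>v. (H undefined y - H undefined z) *v v)"])
    show "0 \<le> onorm (\<lambda>v. (H undefined y - H undefined z) *v v)" for y z
      by (intro onorm_pos_le) simp
  qed (rule hess_lip)
  moreover have "0 \<le> L\<^sub>0"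
    by (rule lipschitz_constant_nonneg[of "\<lambda>y z. norm (g\<^sub>0 y - g\<^sub>0 z)", OF norm_ge_zero g\<^sub>0_lip])
  moreover have "0 \<le> R"
    unfolding R_def by (rule diameter_ge_0[OF bounded_pareto_set])
  ultimately have C: "0 \<le> L\<^sub>0 * (L * R / \<mu>) + norm (g\<^sub>0 x) * (L / \<mu> * (1 + L\<^sub>H * R / \<mu>))"
    using mu_pos L_pos by simp
  have "\<bar>(g\<^sub>0 (xstar f \<beta>) v* hat_grad_xstar g H (xstar f \<beta>) \<beta> - g\<^sub>0 x v* hat_grad_xstar g H x \<beta>)$j\<bar>
     \<le> (L\<^sub>0 * (L * R / \<mu>) + norm (g\<^sub>0 x) * (L / \<mu> * (1 + L\<^sub>H * R / \<mu>))) * norm (x - xstar f \<beta>)"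
    using gradient_inverse_hessian_entry_error[OF assms(1) hess_lip g\<^sub>0_lip, of j x]
    by (simp add: R_def vector_matrix_mult_hat_grad_xstar_nth abs_minus_commute)
  also have "\<dots> \<le> (L\<^sub>0 * (L * R / \<mu>) + norm (g\<^sub>0 x) * (L / \<mu> * (1 + L\<^sub>H * R / \<mu>))) * (norm (grad_beta g \<beta> x) / \<mu>)"
    using dist_xstar_le[OF assms(1)] C by (rule mult_left_mono)
  finally show ?thesis .
qed

end

theorem lemma4:
  fixes f :: "'n::finite \<Rightarrow> real^'d::finite \<Rightarrow> real"
    and g :: "'n \<Rightarrow> real^'d \<Rightarrow> real^'d"
    and H :: "'n \<Rightarrow> real^'d \<Rightarrow> real^'d^'d"
    and f0 :: "real^'d \<Rightarrow> real"
    and g0 :: "real^'d \<Rightarrow> real^'d"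
    and \<mu> L LH L0 :: real
    and x :: "real^'d" and \<beta> :: "real^'n"
  assumes mu_pos: "0 < \<mu>" and mu_le_L: "\<mu> \<le> L"
    and A1_grad: "\<And>i y. (f i has_derivative (\<lambda>h. g i y \<bullet> h)) (at y)"
    and A1_hess: "\<And>i y. (g i has_derivative (\<lambda>h. H i y *v h)) (at y)"
    and A1_lower: "\<And>i y v. \<mu> * (v \<bullet> v) \<le> v \<bullet> (H i y *v v)"
    and A1_upper: "\<And>i y v. v \<bullet> (H i y *v v) \<le> L * (v \<bullet> v)"
    and A2: "\<And>i y z. onorm (\<lambda>v. (H i y - H i z) *v v) \<le> LH * norm (y - z)"
    and A3_grad: "\<And>y. (f0 has_derivative (\<lambda>h. g0 y \<bullet> h)) (at y)"
    and A3_lip: "\<And>y z. norm (g0 y - g0 z) \<le> L0 * norm (y - z)"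
    and R_pos: "0 < diameter (pareto_set f)"
    and beta: "\<beta> \<in> prob_simplex"
  shows "let \<kappa> = L / \<mu>; R = diameter (pareto_set f);
             M0 = \<kappa> * R; M1 = 2 * \<kappa>\<^sup>2 * R * (1 + LH * R / \<mu>)
         in (f0 \<circ> xstar f) differentiable (at \<beta>) \<and>
            norm12 (row_of (frechet_derivative (f0 \<circ> xstar f) (at \<beta>))
                    - rowmat (g0 x v* hat_grad_xstar g H x \<beta>))
              \<le> (1 / \<mu>) * (M1 / (2 * M0) * norm (g0 x) + L0 * M0) * norm (grad_beta g \<beta> x)"
proof -
  interpret smooth_strongly_convex_family f g H \<mu> L
    using mu_pos mu_le_L A1_grad A1_hess A1_lower A1_upper by unfold_locales
  define R where "R = diameter (pareto_set f)"
  define a where "a = g0 (xstar f \<beta>) v* hat_grad_xstar g H (xstar f \<beta>) \<beta> - g0 x v* hat_grad_xstar g H x \<beta>"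
  define C where "C = L0 * (L * R / \<mu>) + norm (g0 x) * (L / \<mu> * (1 + LH * R / \<mu>))"
  have "\<bar>a$j\<bar> \<le> C * (norm (grad_beta g \<beta> x) / \<mu>)" for j
    unfolding a_def C_def R_def by (rule derivative_row_error_nth[OF beta A2 A3_lip])
  then have "norm12 (rowmat a) \<le> C * (norm (grad_beta g \<beta> x) / \<mu>)" by (rule norm12_rowmat_le)
  moreover have "row_of (frechet_derivative (f0 \<circ> xstar f) (at \<beta>)) - rowmat (g0 x v* hat_grad_xstar g H x \<beta>)
      = rowmat a"
    using row_of_derivative_comp_xstar(2)[OF beta A3_grad] by (simp add: a_def rowmat_def vec_eq_iff)
  moreover have "C * (norm (grad_beta g \<beta> x) / \<mu>)
      = (1 / \<mu>) * ((2 * (L / \<mu>)\<^sup>2 * R * (1 + LH * R / \<mu>)) / (2 * (L / \<mu> * R)) * norm (g0 x)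
          + L0 * (L / \<mu> * R)) * norm (grad_beta g \<beta> x)"
    using mu_pos mu_le_L R_pos by (simp add: C_def R_def field_simps power2_eq_square)
  ultimately show ?thesis
    using row_of_derivative_comp_xstar(1)[OF beta A3_grad] unfolding Let_def R_def[symmetric] by (simp only:)
qed

end
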